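(* Let $p,q\ge1$, let $\mu$ and $\nu$ be the uniform probability measures on the unit spheres $\mathcal{S}^{p-1}\subset\mathbb{R}^p$ and $\mathcal{S}^{q-1}\subset\mathbb{R}^q$. For random vectors $X\in\mathbb{R}^p$ and $Y\in\mathbb{R}^q$, $$\mathcal{V}^2(X,Y)=C_pC_q\int_{\mathcal{S}^{p-1}\times\mathcal{S}^{q-1}}\mathcal{V}^2(u^tX,v^tY)\,d\mu(u)\,d\nu(v).$$ Moreover, for a sample $(X_1,Y_1),\ldots,(X_n,Y_n)$, $$\mathcal{V}_n^2(X,Y)=C_pC_q\int_{\mathcal{S}^{p-1}\times\mathcal{S}^{q-1}}\mathcal{V}_n^2(u^tX,v^tY)\,d\mu(u)\,d\nu(v).$$
   Context: $|\cdot|$ is the Euclidean norm; $c_p=\frac{\pi^{(p+1)/2}}{\Gamma((p+1)/2)}$ and $C_p=\frac{c_1c_{p-1}}{c_p}=\frac{\sqrt{\pi}\,\Gamma((p+1)/2)}{\Gamma(p/2)}$ (similarly for $q$). The distance covariance is $\mathcal{V}^2(X,Y)=\int_{\mathbb{R}^{p+q}}\frac{|\phi_{X,Y}(t,s)-\phi_X(t)\phi_Y(s)|^2}{c_pc_q|t|^{p+1}|s|^{q+1}}dt\,ds$, where $\phi$ denote characteristic functions. The sample version $\mathcal{V}_n^2(X,Y)$ is the same integral with $\phi_X,\phi_Y,\phi_{X,Y}$ replaced by the empirical characteristic functions $\hat\phi_X(t)=\frac1n\sum_j e^{iX_j^tt}$, $\hat\phi_Y(s)=\frac1n\sum_j e^{iY_j^ts}$,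 $\hat\phi_{X,Y}(t,s)=\frac1n\sum_j e^{iX_j^tt+iY_j^ts}$. For the projections, $u^tX$ denotes the univariate random variable (resp. sample $(u^tX_1,\ldots,u^tX_n)$), and the distance covariances of univariate variables use $p=q=1$. *)

theory Defs
  imports "HOL-Probability.Probability"
begin

definition c_const :: "nat \<Rightarrow> real" where
  "c_const p = pi powr ((real p + 1) / 2) / Gamma ((real p + 1) / 2)"

definition C_const :: "nat \<Rightarrow> real" where
  "C_const p = sqrt pi * Gamma ((real p + 1) / 2) / Gamma (real p / 2)"

definition dcov_integral ::
  "('p::euclidean_space \<Rightarrow> 'q::euclidean_space \<Rightarrow> complex) \<Rightarrow> ('p \<Rightarrow> complex) \<Rightarrow> ('q \<Rightarrow> complex) \<Rightarrow> ennreal" where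
  "dcov_integral phiXY phiX phiY =
     (\<integral>\<^sup>+ ts. ennreal ((cmod (phiXY (fst ts) (snd ts) - phiX (fst ts) * phiY (snd ts)))\<^sup>2
        / (c_const DIM('p) * c_const DIM('q) * norm (fst ts) ^ (DIM('p) + 1)
           * norm (snd ts) ^ (DIM('q) + 1))) \<partial>(lborel :: ('p \<times> 'q) measure))"

definition char_fun :: "'a measure \<Rightarrow> ('a \<Rightarrow> 'p::euclidean_space) \<Rightarrow> 'p \<Rightarrow> complex" where
  "char_fun M X t = (\<integral>\<omega>. cis (t \<bullet> X \<omega>) \<partial>M)"

definition joint_char_fun ::
  "'a measure \<Rightarrow> ('a \<Rightarrow> 'p::euclidean_space) \<Rightarrow> ('a \<Rightarrow> 'q::euclidean_space) \<Rightarrow> 'p \<Rightarrow> 'q \<Rightarrow> complex" where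
  "joint_char_fun M X Y t s = (\<integral>\<omega>. cis (t \<bullet> X \<omega> + s \<bullet> Y \<omega>) \<partial>M)"

definition dcov :: "'a measure \<Rightarrow> ('a \<Rightarrow> 'p::euclidean_space) \<Rightarrow> ('a \<Rightarrow> 'q::euclidean_space) \<Rightarrow> ennreal" where
  "dcov M X Y = dcov_integral (joint_char_fun M X Y) (char_fun M X) (char_fun M Y)"

definition emp_char_fun :: "nat \<Rightarrow> (nat \<Rightarrow> 'p::euclidean_space) \<Rightarrow> 'p \<Rightarrow> complex" where
  "emp_char_fun n Xs t = (\<Sum>j<n. cis (t \<bullet> Xs j)) / of_nat n"

definition emp_joint_char_fun ::
  "nat \<Rightarrow> (nat \<Rightarrow> 'p::euclidean_space) \<Rightarrow> (nat \<Rightarrow> 'q::euclidean_space) \<Rightarrow> 'p \<Rightarrow> 'q \<Rightarrow> complex" where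
  "emp_joint_char_fun n Xs Ys t s = (\<Sum>j<n. cis (t \<bullet> Xs j + s \<bullet> Ys j)) / of_nat n"

definition dcov_n :: "nat \<Rightarrow> (nat \<Rightarrow> 'p::euclidean_space) \<Rightarrow> (nat \<Rightarrow> 'q::euclidean_space) \<Rightarrow> ennreal" where
  "dcov_n n Xs Ys = dcov_integral (emp_joint_char_fun n Xs Ys) (emp_char_fun n Xs) (emp_char_fun n Ys)"

text \<open>Uniform probability measure on the unit sphere S^{p-1} (normalised surface measure),
  realised as the cone measure: the image of the uniform distribution on the unit ball
  under radial projection x \<mapsto> x / |x|.\<close>
definition sphere_unif :: "'p::euclidean_space measure" where
  "sphere_unif = distr (uniform_measure lborel (ball 0 1)) borel (\<lambda>x. x /\<^sub>R norm x)"

end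

theory Submission
  imports Defs
begin

text \<open>In polar coordinates t = r u, with r ranging over the whole real line and u over the unit
  sphere, Lebesgue measure on R^p becomes (p w_p / 2) |r|^(p-1) dr d\<sigma>(u), where w_p is the volume
  of the unit ball and \<sigma> the uniform measure on the sphere. As \<sigma> is the radial projection of the
  uniform distribution on the ball, this follows by Fubini from the weight |y|^p / |t|^(p+1) on
  {|y| < |t|}, whose integral over t is 2/p.

  In the distance covariance integral the weight |t|^-(p+1) combines with the Jacobian |r|^(p-1)
  to |r|^-2, the weight of the one-dimensional distance covariance, and the characteristic function
  of u^t X at r is that of X at r u. So the inner integral over (r, \<rho>) is the distance covariance
  of (u^t X, v^t Y), and the constants collect to (p w_p / 2) c_1 / c_p = C_p.\<close>

lemma sets_sphere_unif [measurable_cong, simp]: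
  "sets (sphere_unif :: 'p::euclidean_space measure) = sets borel"
  unfolding sphere_unif_def by simp

lemma emeasure_lborel_unit_ball:
  "emeasure lborel (ball (0::'p::euclidean_space) 1) = ennreal (unit_ball_vol DIM('p))"
  using emeasure_ball[where c="0::'p" and r=1] by simp

lemma prob_space_sphere_unif: "prob_space (sphere_unif :: 'p::euclidean_space measure)"
proof -
  have "unit_ball_vol (real DIM('p)) \<noteq> 0"
    using unit_ball_vol_pos[of "real DIM('p)"] by (metis of_nat_0_le_iff order.strict_implies_not_eq)
  then have "prob_space (uniform_measure lborel (ball (0::'p) 1))"
    by (intro prob_space_uniform_measure) (simp_all add: emeasure_lborel_unit_ball)
  then show ?thesis
    unfolding sphere_unif_def by (rule prob_space.prob_space_distr) simp
qed

interpretation sphere_unif: prob_space "sphere_unif :: 'p::euclidean_space measure"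
  by (rule prob_space_sphere_unif)

lemma nn_integral_sphere_unif:
  assumes [measurable]: "h \<in> borel_measurable (borel :: 'p::euclidean_space measure)"
  shows "(\<integral>\<^sup>+u. h u \<partial>(sphere_unif :: 'p measure)) =
     (\<integral>\<^sup>+x. h (x /\<^sub>R norm x) * indicator (ball 0 1) x \<partial>lborel) / ennreal (unit_ball_vol DIM('p))"
  unfolding sphere_unif_def
  by (simp add: nn_integral_distr nn_integral_uniform_measure emeasure_lborel_unit_ball)

lemma AE_sphere_unif_norm: "AE u in (sphere_unif :: 'p::euclidean_space measure). norm u = 1"
proof -
  have "AE x in uniform_measure lborel (ball (0::'p) 1). norm (x /\<^sub>R norm x) = 1"
    by (rule AE_uniform_measureI)
       (use AE_lborel_singleton[of "0::'p"] in \<open>auto elim: eventually_mono\<close>)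
  then show ?thesis
    unfolding sphere_unif_def by (subst AE_distr_iff) simp_all
qed

lemma AE_sphere_unif_pair_norm:
  "AE uv in (sphere_unif :: 'p::euclidean_space measure) \<Otimes>\<^sub>M (sphere_unif :: 'q::euclidean_space measure).
     norm (fst uv) = 1 \<and> norm (snd uv) = 1"
proof -
  interpret pair_sigma_finite "sphere_unif :: 'p measure" "sphere_unif :: 'q measure"
    by unfold_locales
  show ?thesis
    by (rule AE_pair_measure) (measurable, simp add: AE_sphere_unif_norm)
qed

lemma nn_integral_power_tail:
  fixes a :: real
  assumes a: "a > 0" and p: "p \<ge> 1"
  shows "(\<integral>\<^sup>+t. ennreal (if a < \<bar>t\<bar> then a ^ p / \<bar>t\<bar> ^ (p + 1) else 0) \<partial>lborel) = ennreal (2 / p)"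
proof -
  define h where "h t = ennreal (a ^ p / t ^ (p + 1)) * indicator {a..} t" for t :: real
  have [measurable]: "h \<in> borel_measurable borel"
    unfolding h_def by measurable
  have "((\<lambda>t. a ^ p * (1 / t ^ (p + 1))) has_integral a ^ p * (1 / (real (p + 1 - 1) * a ^ (p + 1 - 1)))) {a..}"
    by (intro has_integral_mult_right has_integral_inverse_power_to_inf) (use a p in auto)
  then have "(\<integral>\<^sup>+t. h t \<partial>lborel) = ennreal (a ^ p * (1 / (real p * a ^ p)))"
    unfolding h_def using a by (intro nn_integral_has_integral_lebesgue') auto
  also have "\<dots> = ennreal (1 / p)"
    using a by simp
  finally have half: "(\<integral>\<^sup>+t. h t \<partial>lborel) = ennreal (1 / p)" .
  have "(\<integral>\<^sup>+t. ennreal (if a < \<bar>t\<bar> then a ^ p / \<bar>t\<bar> ^ (p + 1) else 0) \<partial>lborel)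
      = (\<integral>\<^sup>+t. h t + h (0 + -1 * t) \<partial>lborel)"
  proof (rule nn_integral_cong_AE)
    have "AE t in lborel. t \<noteq> a" "AE t in lborel. t \<noteq> -a"
      by (rule AE_lborel_singleton)+
    then show "AE t in lborel. ennreal (if a < \<bar>t\<bar> then a ^ p / \<bar>t\<bar> ^ (p + 1) else 0) = h t + h (0 + -1 * t)"
      by eventually_elim (use a in \<open>auto simp: h_def split: split_indicator\<close>)
  qed
  also have "\<dots> = (\<integral>\<^sup>+t. h t \<partial>lborel) + (\<integral>\<^sup>+t. h (0 + -1 * t) \<partial>lborel)"
    by (rule nn_integral_add) auto
  also have "(\<integral>\<^sup>+t. h (0 + -1 * t) \<partial>lborel) = (\<integral>\<^sup>+t. h t \<partial>lborel)"
    using nn_integral_real_affine[of h "-1" 0] by simp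
  finally show ?thesis
    using p by (simp add: half ennreal_plus[symmetric] del: ennreal_plus)
qed

lemma nn_integral_radial_rescale:
  fixes g :: "real \<Rightarrow> ennreal"
  assumes [measurable]: "g \<in> borel_measurable borel" and c: "c > 0"
  shows "(\<integral>\<^sup>+r. g (r / c) * ennreal (\<bar>r\<bar> ^ k) \<partial>lborel) = ennreal (c ^ Suc k) * (\<integral>\<^sup>+t. g t * ennreal (\<bar>t\<bar> ^ k) \<partial>lborel)"
proof -
  have "(\<integral>\<^sup>+r. g (r / c) * ennreal (\<bar>r\<bar> ^ k) \<partial>lborel)
      = ennreal c * (\<integral>\<^sup>+t. g ((0 + c * t) / c) * ennreal (\<bar>0 + c * t\<bar> ^ k) \<partial>lborel)"
    using c by (subst nn_integral_real_affine[where c=c and t=0]) auto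
  also have "(\<integral>\<^sup>+t. g ((0 + c * t) / c) * ennreal (\<bar>0 + c * t\<bar> ^ k) \<partial>lborel)
      = (\<integral>\<^sup>+t. ennreal (c ^ k) * (g t * ennreal (\<bar>t\<bar> ^ k)) \<partial>lborel)"
    using c by (intro nn_integral_cong) (simp add: abs_mult power_mult_distrib ennreal_mult ac_simps)
  also have "\<dots> = ennreal (c ^ k) * (\<integral>\<^sup>+t. g t * ennreal (\<bar>t\<bar> ^ k) \<partial>lborel)"
    by (rule nn_integral_cmult) measurable
  finally show ?thesis
    using c by (simp add: ennreal_mult mult.assoc)
qed

definition radial_tail_weight :: "real \<Rightarrow> 'p::euclidean_space \<Rightarrow> real" where
  "radial_tail_weight t y = (if norm y < \<bar>t\<bar> then norm y ^ DIM('p) / \<bar>t\<bar> ^ (DIM('p) + 1) else 0)"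

lemma radial_tail_weight_nonneg: "radial_tail_weight t y \<ge> 0"
  unfolding radial_tail_weight_def by simp

lemma radial_tail_weight_measurable [measurable]:
  "(\<lambda>(t, y). radial_tail_weight t y) \<in> borel_measurable (borel \<Otimes>\<^sub>M (borel :: 'p::euclidean_space measure))"
  unfolding radial_tail_weight_def by measurable

lemma nn_integral_radial_tail_weight:
  assumes "y \<noteq> 0"
  shows "(\<integral>\<^sup>+t. ennreal (radial_tail_weight t (y :: 'p::euclidean_space)) \<partial>lborel) = ennreal (2 / DIM('p))"
  unfolding radial_tail_weight_def using assms nn_integral_power_tail[of "norm y" "DIM('p)"] by simp

lemma nn_integral_radial_tail_weight_rescale:
  fixes g :: "'p::euclidean_space \<Rightarrow> ennreal"
  assumes [measurable]: "g \<in> borel_measurable borel" and t: "t \<noteq> 0"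
  shows "(\<integral>\<^sup>+y. g y * ennreal (radial_tail_weight t y) \<partial>lborel)
     = (\<integral>\<^sup>+x. ennreal (indicator (ball 0 1) x * norm x ^ DIM('p) * \<bar>t\<bar> ^ (DIM('p) - 1)) * g (t *\<^sub>R x) \<partial>lborel)"
proof -
  have weight: "\<bar>t\<bar> ^ DIM('p) * radial_tail_weight t (t *\<^sub>R x)
      = indicator (ball 0 1) x * norm x ^ DIM('p) * \<bar>t\<bar> ^ (DIM('p) - 1)" for x :: 'p
  proof -
    have "\<bar>t\<bar> ^ DIM('p) = \<bar>t\<bar> * \<bar>t\<bar> ^ (DIM('p) - 1)"
      by (simp add: power_eq_if)
    then show ?thesis
      using t by (simp add: radial_tail_weight_def indicator_def power_mult_distrib field_simps)
  qed
  have "(\<integral>\<^sup>+y. g y * ennreal (radial_tail_weight t y) \<partial>lborel)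
      = (\<integral>\<^sup>+x. ennreal (\<bar>t\<bar> ^ DIM('p)) * (g (t *\<^sub>R x) * ennreal (radial_tail_weight t (t *\<^sub>R x))) \<partial>lborel)"
    by (subst lborel_affine[OF t, where t=0]) (simp add: nn_integral_density nn_integral_distr)
  also have "\<dots> = (\<integral>\<^sup>+x. ennreal (indicator (ball 0 1) x * norm x ^ DIM('p) * \<bar>t\<bar> ^ (DIM('p) - 1)) * g (t *\<^sub>R x) \<partial>lborel)"
    unfolding weight[symmetric]
    by (intro nn_integral_cong) (simp add: ennreal_mult radial_tail_weight_nonneg ac_simps)
  finally show ?thesis .
qed

definition sphere_area :: "nat \<Rightarrow> real" where
  "sphere_area p = real p * unit_ball_vol (real p)"

lemma sphere_area_nonneg: "sphere_area p \<ge> 0"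
  unfolding sphere_area_def using unit_ball_vol_pos[of "real p"] by simp

lemma nn_integral_sphere_unif_radial:
  fixes g :: "'p::euclidean_space \<Rightarrow> ennreal"
  assumes [measurable]: "g \<in> borel_measurable borel"
  shows "(\<integral>\<^sup>+u. \<integral>\<^sup>+r. g (r *\<^sub>R u) * ennreal (\<bar>r\<bar> ^ (DIM('p) - 1)) \<partial>lborel \<partial>sphere_unif)
     = (\<integral>\<^sup>+x. \<integral>\<^sup>+t. ennreal (indicator (ball 0 1) x * norm x ^ DIM('p) * \<bar>t\<bar> ^ (DIM('p) - 1)) * g (t *\<^sub>R x)
          \<partial>lborel \<partial>lborel) / ennreal (unit_ball_vol DIM('p))"
proof -
  define p where "p = DIM('p)"
  have p: "p \<ge> 1"
    unfolding p_def using DIM_positive[where 'a='p] by linarith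
  have radial: "(\<integral>\<^sup>+r. g (r *\<^sub>R (x /\<^sub>R norm x)) * ennreal (\<bar>r\<bar> ^ (p - 1)) \<partial>lborel) * indicator (ball 0 1) x
      = (\<integral>\<^sup>+t. ennreal (indicator (ball 0 1) x * norm x ^ p * \<bar>t\<bar> ^ (p - 1)) * g (t *\<^sub>R x) \<partial>lborel)"
    if "x \<noteq> 0" for x
  proof -
    have "(\<integral>\<^sup>+r. g (r *\<^sub>R (x /\<^sub>R norm x)) * ennreal (\<bar>r\<bar> ^ (p - 1)) \<partial>lborel)
        = (\<integral>\<^sup>+r. g ((r / norm x) *\<^sub>R x) * ennreal (\<bar>r\<bar> ^ (p - 1)) \<partial>lborel)"
      by (simp add: divide_inverse mult.commute)
    also have "\<dots> = ennreal (norm x ^ Suc (p - 1)) * (\<integral>\<^sup>+t. g (t *\<^sub>R x) * ennreal (\<bar>t\<bar> ^ (p - 1)) \<partial>lborel)"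
      by (rule nn_integral_radial_rescale[where g="\<lambda>s. g (s *\<^sub>R x)"]) (use that in auto)
    finally have "(\<integral>\<^sup>+r. g (r *\<^sub>R (x /\<^sub>R norm x)) * ennreal (\<bar>r\<bar> ^ (p - 1)) \<partial>lborel) * indicator (ball 0 1) x
        = (\<integral>\<^sup>+t. ennreal (indicator (ball 0 1) x * norm x ^ p) * (g (t *\<^sub>R x) * ennreal (\<bar>t\<bar> ^ (p - 1))) \<partial>lborel)"
      using p by (subst nn_integral_cmult) (auto simp: ennreal_mult ac_simps split: split_indicator)
    then show ?thesis
      by (simp add: ennreal_mult ac_simps)
  qed
  have "(\<integral>\<^sup>+u. \<integral>\<^sup>+r. g (r *\<^sub>R u) * ennreal (\<bar>r\<bar> ^ (p - 1)) \<partial>lborel \<partial>sphere_unif)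
      = (\<integral>\<^sup>+x. (\<integral>\<^sup>+r. g (r *\<^sub>R (x /\<^sub>R norm x)) * ennreal (\<bar>r\<bar> ^ (p - 1)) \<partial>lborel)
           * indicator (ball 0 1) x \<partial>lborel) / ennreal (unit_ball_vol DIM('p))"
    by (rule nn_integral_sphere_unif) measurable
  also have "(\<integral>\<^sup>+x. (\<integral>\<^sup>+r. g (r *\<^sub>R (x /\<^sub>R norm x)) * ennreal (\<bar>r\<bar> ^ (p - 1)) \<partial>lborel)
           * indicator (ball 0 1) x \<partial>lborel)
      = (\<integral>\<^sup>+x. \<integral>\<^sup>+t. ennreal (indicator (ball 0 1) x * norm x ^ p * \<bar>t\<bar> ^ (p - 1)) * g (t *\<^sub>R x) \<partial>lborel \<partial>lborel)"
    by (intro nn_integral_cong_AE eventually_mono[OF AE_lborel_singleton[of 0]] radial)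
  finally show ?thesis
    unfolding p_def .
qed

lemma nn_integral_ball_radial_weight:
  fixes g :: "'p::euclidean_space \<Rightarrow> ennreal"
  assumes [measurable]: "g \<in> borel_measurable borel"
  shows "(\<integral>\<^sup>+x. \<integral>\<^sup>+t. ennreal (indicator (ball 0 1) x * norm x ^ DIM('p) * \<bar>t\<bar> ^ (DIM('p) - 1)) * g (t *\<^sub>R x)
          \<partial>lborel \<partial>lborel) = ennreal (2 / DIM('p)) * (\<integral>\<^sup>+y. g y \<partial>lborel)"
proof -
  have [measurable]: "ball (0::'p) 1 \<in> sets borel"
    by simp
  have "(\<integral>\<^sup>+x. \<integral>\<^sup>+t. ennreal (indicator (ball 0 1) x * norm x ^ DIM('p) * \<bar>t\<bar> ^ (DIM('p) - 1)) * g (t *\<^sub>R x)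
          \<partial>lborel \<partial>lborel)
      = (\<integral>\<^sup>+t. \<integral>\<^sup>+x. ennreal (indicator (ball 0 1) x * norm x ^ DIM('p) * \<bar>t\<bar> ^ (DIM('p) - 1)) * g (t *\<^sub>R x)
          \<partial>lborel \<partial>lborel)"
    by (rule lborel_pair.Fubini'[symmetric]) measurable
  also have "\<dots> = (\<integral>\<^sup>+t. \<integral>\<^sup>+y. g y * ennreal (radial_tail_weight t y) \<partial>lborel \<partial>lborel)"
    using AE_lborel_singleton[of "0::real"]
    by (intro nn_integral_cong_AE) (auto elim!: eventually_mono simp: nn_integral_radial_tail_weight_rescale)
  also have "\<dots> = (\<integral>\<^sup>+y. \<integral>\<^sup>+t. g y * ennreal (radial_tail_weight t y) \<partial>lborel \<partial>lborel)"
    by (rule lborel_pair.Fubini') measurable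
  also have "\<dots> = (\<integral>\<^sup>+y. ennreal (2 / DIM('p)) * g y \<partial>lborel)"
    using AE_lborel_singleton[of "0::'p"]
    by (intro nn_integral_cong_AE)
       (auto elim!: eventually_mono simp: nn_integral_cmult nn_integral_radial_tail_weight mult.commute)
  also have "\<dots> = ennreal (2 / DIM('p)) * (\<integral>\<^sup>+y. g y \<partial>lborel)"
    by (rule nn_integral_cmult) measurable
  finally show ?thesis .
qed

lemma nn_integral_lborel_polar:
  fixes g :: "'p::euclidean_space \<Rightarrow> ennreal"
  assumes [measurable]: "g \<in> borel_measurable borel"
  shows "(\<integral>\<^sup>+x. g x \<partial>lborel) = ennreal (sphere_area DIM('p) / 2) *
     (\<integral>\<^sup>+u. \<integral>\<^sup>+r. g (r *\<^sub>R u) * ennreal (\<bar>r\<bar> ^ (DIM('p) - 1)) \<partial>lborel \<partial>sphere_unif)"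
proof -
  define p where "p = DIM('p)"
  define V where "V = unit_ball_vol DIM('p)"
  have p: "p \<ge> 1"
    unfolding p_def using DIM_positive[where 'a='p] by linarith
  have V: "V > 0"
    unfolding V_def by (rule unit_ball_vol_pos) simp
  have "sphere_area p = p * V"
    unfolding sphere_area_def V_def p_def ..
  then have "ennreal (sphere_area p / 2) * ennreal (2 / p) * ennreal (inverse V) = 1"
    using p V by (simp add: ennreal_mult[symmetric])
  then have "ennreal (sphere_area p / 2) * (ennreal (2 / p) * (\<integral>\<^sup>+y. g y \<partial>lborel) / ennreal V)
      = (\<integral>\<^sup>+y. g y \<partial>lborel)"
    by (metis divide_ennreal_def inverse_ennreal[OF V] mult.assoc mult.commute mult_1)
  then show ?thesis
    unfolding nn_integral_sphere_unif_radial[OF assms] nn_integral_ball_radial_weight[OF assms] p_def V_def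
    by simp
qed

lemma nn_integral_lborel_pair:
  fixes f :: "'a::euclidean_space \<times> 'b::euclidean_space \<Rightarrow> ennreal"
  assumes "f \<in> borel_measurable (borel \<Otimes>\<^sub>M borel)"
  shows "(\<integral>\<^sup>+x. \<integral>\<^sup>+y. f (x, y) \<partial>lborel \<partial>lborel) = (\<integral>\<^sup>+z. f z \<partial>lborel)"
  unfolding lborel_prod[symmetric] by (rule lborel.nn_integral_fst) (use assms in measurable)

interpretation sphere_unif_lborel:
  pair_sigma_finite "sphere_unif :: 'p::euclidean_space measure" "lborel :: 'q::euclidean_space measure"
  by unfold_locales

lemma nn_integral_lborel_polar_pair:
  fixes f :: "'p::euclidean_space \<times> 'q::euclidean_space \<Rightarrow> ennreal"
  assumes [measurable]: "f \<in> borel_measurable (borel \<Otimes>\<^sub>M borel)"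
  shows "(\<integral>\<^sup>+ts. f ts \<partial>lborel) = ennreal (sphere_area DIM('p) / 2) * ennreal (sphere_area DIM('q) / 2) *
     (\<integral>\<^sup>+uv. \<integral>\<^sup>+rs. f (fst rs *\<^sub>R fst uv, snd rs *\<^sub>R snd uv) *
        ennreal (\<bar>fst rs\<bar> ^ (DIM('p) - 1) * \<bar>snd rs\<bar> ^ (DIM('q) - 1)) \<partial>lborel \<partial>(sphere_unif \<Otimes>\<^sub>M sphere_unif))"
proof -
  define F where "F uv rs = f (fst rs *\<^sub>R fst uv, snd rs *\<^sub>R snd uv) *
    ennreal (\<bar>fst rs\<bar> ^ (DIM('p) - 1) * \<bar>snd rs\<bar> ^ (DIM('q) - 1))" for uv :: "'p \<times> 'q" and rs :: "real \<times> real"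
  define Q where "Q t = (\<integral>\<^sup>+v. \<integral>\<^sup>+\<rho>. f (t, \<rho> *\<^sub>R v) * ennreal (\<bar>\<rho>\<bar> ^ (DIM('q) - 1)) \<partial>lborel \<partial>sphere_unif)"
    for t :: 'p
  have [measurable]: "Q \<in> borel_measurable borel"
    unfolding Q_def by measurable
  have radial: "Q (r *\<^sub>R u) * ennreal (\<bar>r\<bar> ^ (DIM('p) - 1)) = (\<integral>\<^sup>+v. \<integral>\<^sup>+\<rho>. F (u, v) (r, \<rho>) \<partial>lborel \<partial>sphere_unif)"
    for u r
  proof -
    have "Q (r *\<^sub>R u) * ennreal (\<bar>r\<bar> ^ (DIM('p) - 1))
        = (\<integral>\<^sup>+v. \<integral>\<^sup>+\<rho>. f (r *\<^sub>R u, \<rho> *\<^sub>R v) * ennreal (\<bar>\<rho>\<bar> ^ (DIM('q) - 1)) * ennreal (\<bar>r\<bar> ^ (DIM('p) - 1))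
            \<partial>lborel \<partial>sphere_unif)"
      unfolding Q_def
      by (subst nn_integral_multc[symmetric], measurable, intro nn_integral_cong nn_integral_multc[symmetric])
         measurable
    then show ?thesis
      by (simp add: F_def ennreal_mult ac_simps)
  qed
  have "(\<integral>\<^sup>+ts. f ts \<partial>lborel) = (\<integral>\<^sup>+t. \<integral>\<^sup>+s. f (t, s) \<partial>lborel \<partial>lborel)"
    by (rule nn_integral_lborel_pair[symmetric]) measurable
  also have "\<dots> = (\<integral>\<^sup>+t. ennreal (sphere_area DIM('q) / 2) * Q t \<partial>lborel)"
    unfolding Q_def by (intro nn_integral_cong nn_integral_lborel_polar) measurable
  also have "\<dots> = ennreal (sphere_area DIM('q) / 2) * ennreal (sphere_area DIM('p) / 2) *
      (\<integral>\<^sup>+u. \<integral>\<^sup>+r. Q (r *\<^sub>R u) * ennreal (\<bar>r\<bar> ^ (DIM('p) - 1)) \<partial>lborel \<partial>sphere_unif)"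
    by (simp add: nn_integral_cmult nn_integral_lborel_polar[of Q] mult.assoc)
  also have "(\<integral>\<^sup>+u. \<integral>\<^sup>+r. Q (r *\<^sub>R u) * ennreal (\<bar>r\<bar> ^ (DIM('p) - 1)) \<partial>lborel \<partial>sphere_unif)
      = (\<integral>\<^sup>+u. \<integral>\<^sup>+v. \<integral>\<^sup>+r. \<integral>\<^sup>+\<rho>. F (u, v) (r, \<rho>) \<partial>lborel \<partial>lborel \<partial>sphere_unif \<partial>sphere_unif)"
    unfolding radial F_def prod.sel by (intro nn_integral_cong sphere_unif_lborel.Fubini') measurable
  also have "\<dots> = (\<integral>\<^sup>+u. \<integral>\<^sup>+v. \<integral>\<^sup>+rs. F (u, v) rs \<partial>lborel \<partial>sphere_unif \<partial>sphere_unif)"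
    unfolding F_def by (intro nn_integral_cong nn_integral_lborel_pair) measurable
  also have "\<dots> = (\<integral>\<^sup>+uv. \<integral>\<^sup>+rs. F uv rs \<partial>lborel \<partial>(sphere_unif \<Otimes>\<^sub>M sphere_unif))"
    unfolding F_def lborel_prod[symmetric] by (rule sphere_unif.nn_integral_fst) measurable
  finally show ?thesis
    by (simp add: F_def ac_simps)
qed

lemma c_const_pos: "c_const p > 0"
  unfolding c_const_def by simp

lemma C_const_eq_sphere_area:
  assumes "p \<ge> 1"
  shows "C_const p = sphere_area p / 2 * c_const 1 / c_const p"
proof -
  define a where "a = real p / 2"
  have a: "a > 0"
    unfolding a_def using assms by simp
  have Gamma_succ: "Gamma (a + 1) = a * Gamma a"
    by (rule Gamma_plus1) (use a nonpos_Ints_nonpos in fastforce)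
  have "pi powr a * pi / pi powr ((real p + 1) / 2) = pi powr (a + 1 - (real p + 1) / 2)"
    by (simp add: powr_add powr_diff)
  also have "a + 1 - (real p + 1) / 2 = 1 / 2"
    unfolding a_def by (simp add: field_simps)
  finally have sqrt_pi: "pi powr a * pi / pi powr ((real p + 1) / 2) = sqrt pi"
    by (simp add: powr_half_sqrt)
  have "sphere_area p / 2 * c_const 1 / c_const p
      = (pi powr a * pi / pi powr ((real p + 1) / 2)) * Gamma ((real p + 1) / 2) / Gamma a"
    unfolding sphere_area_def unit_ball_vol_def c_const_def a_def[symmetric] Gamma_succ
    using a by (simp add: a_def field_simps)
  also have "\<dots> = C_const p"
    unfolding C_const_def sqrt_pi[symmetric] a_def ..
  finally show ?thesis ..
qed

lemma ennreal_C_const_mult: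
  assumes p: "p \<ge> 1" and q: "q \<ge> 1"
  shows "ennreal (sphere_area p / 2) * ennreal (sphere_area q / 2) *
      ennreal (c_const 1 * c_const 1 / (c_const p * c_const q)) = ennreal (C_const p * C_const q)"
proof -
  have "sphere_area p / 2 * (sphere_area q / 2) * (c_const 1 * c_const 1 / (c_const p * c_const q))
      = C_const p * C_const q"
    unfolding C_const_eq_sphere_area[OF p] C_const_eq_sphere_area[OF q] by simp
  then show ?thesis
    by (simp add: ennreal_mult[symmetric] sphere_area_nonneg c_const_pos less_imp_le)
qed

lemma nn_integral_dcov_weight_radial:
  fixes h :: "real \<times> real \<Rightarrow> real" and cp cq c :: real
  assumes [measurable]: "h \<in> borel_measurable (borel \<Otimes>\<^sub>M borel)" and h_nonneg: "\<And>rs. h rs \<ge> 0"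
    and p: "p \<ge> 1" and q: "q \<ge> 1" and pos: "cp > 0" "cq > 0" "c > 0"
  shows "(\<integral>\<^sup>+rs. ennreal (h rs / (cp * cq * \<bar>fst rs\<bar> ^ (p + 1) * \<bar>snd rs\<bar> ^ (q + 1))) *
            ennreal (\<bar>fst rs\<bar> ^ (p - 1) * \<bar>snd rs\<bar> ^ (q - 1)) \<partial>lborel)
     = ennreal (c / (cp * cq)) * (\<integral>\<^sup>+rs. ennreal (h rs / (c * (fst rs)\<^sup>2 * (snd rs)\<^sup>2)) \<partial>lborel)"
proof -
  have weight: "ennreal (x / (cp * cq * \<bar>r\<bar> ^ (p + 1) * \<bar>\<rho>\<bar> ^ (q + 1))) * ennreal (\<bar>r\<bar> ^ (p - 1) * \<bar>\<rho>\<bar> ^ (q - 1))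
      = ennreal (c / (cp * cq)) * ennreal (x / (c * r\<^sup>2 * \<rho>\<^sup>2))" if "x \<ge> 0" for x r \<rho> :: real
  proof -
    have "x / (cp * cq * \<bar>r\<bar> ^ (p + 1) * \<bar>\<rho>\<bar> ^ (q + 1)) * (\<bar>r\<bar> ^ (p - 1) * \<bar>\<rho>\<bar> ^ (q - 1))
        = c / (cp * cq) * (x / (c * r\<^sup>2 * \<rho>\<^sup>2))"
    proof (cases "r = 0 \<or> \<rho> = 0")
      case True
      then show ?thesis
        using p q by auto
    next
      case False
      have "p + 1 = (p - 1) + 2" "q + 1 = (q - 1) + 2"
        using p q by simp_all
      then have "\<bar>r\<bar> ^ (p + 1) = \<bar>r\<bar> ^ (p - 1) * r\<^sup>2" "\<bar>\<rho>\<bar> ^ (q + 1) = \<bar>\<rho>\<bar> ^ (q - 1) * \<rho>\<^sup>2"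
        by (metis power2_abs power_add)+
      then show ?thesis
        using False pos by (simp add: field_simps)
    qed
    then show ?thesis
      using that pos by (simp add: ennreal_mult[symmetric])
  qed
  have "(\<integral>\<^sup>+rs. ennreal (h rs / (cp * cq * \<bar>fst rs\<bar> ^ (p + 1) * \<bar>snd rs\<bar> ^ (q + 1))) *
            ennreal (\<bar>fst rs\<bar> ^ (p - 1) * \<bar>snd rs\<bar> ^ (q - 1)) \<partial>lborel)
      = (\<integral>\<^sup>+rs. ennreal (c / (cp * cq)) * ennreal (h rs / (c * (fst rs)\<^sup>2 * (snd rs)\<^sup>2)) \<partial>lborel)"
    by (intro nn_integral_cong weight h_nonneg)
  also have "\<dots> = ennreal (c / (cp * cq)) * (\<integral>\<^sup>+rs. ennreal (h rs / (c * (fst rs)\<^sup>2 * (snd rs)\<^sup>2)) \<partial>lborel)"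
    unfolding lborel_prod[symmetric] by (rule nn_integral_cmult) measurable
  finally show ?thesis .
qed

lemma nn_integral_dcov_weight_polar:
  fixes F :: "'p::euclidean_space \<times> 'q::euclidean_space \<Rightarrow> real"
  assumes [measurable]: "F \<in> borel_measurable (borel \<Otimes>\<^sub>M borel)" and F_nonneg: "\<And>ts. F ts \<ge> 0"
  shows "(\<integral>\<^sup>+ts. ennreal (F ts / (c_const DIM('p) * c_const DIM('q) *
            norm (fst ts) ^ (DIM('p) + 1) * norm (snd ts) ^ (DIM('q) + 1))) \<partial>lborel)
     = ennreal (C_const DIM('p) * C_const DIM('q)) *
       (\<integral>\<^sup>+uv. \<integral>\<^sup>+rs. ennreal (F (fst rs *\<^sub>R fst uv, snd rs *\<^sub>R snd uv) /
            (c_const 1 * c_const 1 * (fst rs)\<^sup>2 * (snd rs)\<^sup>2)) \<partial>lborel \<partial>(sphere_unif \<Otimes>\<^sub>M sphere_unif))"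
proof -
  define p where "p = DIM('p)"
  define q where "q = DIM('q)"
  define k where "k = c_const 1 * c_const 1 / (c_const p * c_const q)"
  define G where "G uv = (\<integral>\<^sup>+rs. ennreal (F (fst rs *\<^sub>R fst uv, snd rs *\<^sub>R snd uv) /
    (c_const 1 * c_const 1 * (fst rs)\<^sup>2 * (snd rs)\<^sup>2)) \<partial>lborel)" for uv :: "'p \<times> 'q"
  define W where "W uv = (\<integral>\<^sup>+rs. ennreal (F (fst rs *\<^sub>R fst uv, snd rs *\<^sub>R snd uv) /
    (c_const p * c_const q * norm (fst rs *\<^sub>R fst uv) ^ (p + 1) * norm (snd rs *\<^sub>R snd uv) ^ (q + 1))) *
    ennreal (\<bar>fst rs\<bar> ^ (p - 1) * \<bar>snd rs\<bar> ^ (q - 1)) \<partial>lborel)" for uv :: "'p \<times> 'q"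
  have p: "p \<ge> 1" and q: "q \<ge> 1"
    unfolding p_def q_def using DIM_positive[where 'a='p] DIM_positive[where 'a='q] by linarith+
  have "(\<integral>\<^sup>+ts. ennreal (F ts / (c_const p * c_const q * norm (fst ts) ^ (p + 1) * norm (snd ts) ^ (q + 1))) \<partial>lborel)
      = ennreal (sphere_area p / 2) * ennreal (sphere_area q / 2) * (\<integral>\<^sup>+uv. W uv \<partial>(sphere_unif \<Otimes>\<^sub>M sphere_unif))"
    unfolding W_def p_def q_def by (subst nn_integral_lborel_polar_pair) simp_all
  also have "(\<integral>\<^sup>+uv. W uv \<partial>(sphere_unif \<Otimes>\<^sub>M sphere_unif)) = (\<integral>\<^sup>+uv. ennreal k * G uv \<partial>(sphere_unif \<Otimes>\<^sub>M sphere_unif))"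
    using AE_sphere_unif_pair_norm
  proof (rule nn_integral_cong_AE[OF eventually_mono])
    fix uv :: "'p \<times> 'q"
    assume "norm (fst uv) = 1 \<and> norm (snd uv) = 1"
    then have unit: "norm (fst uv) = 1" "norm (snd uv) = 1"
      by simp_all
    show "W uv = ennreal k * G uv"
      unfolding W_def G_def k_def norm_scaleR unit mult_1_right
      by (rule nn_integral_dcov_weight_radial[OF _ _ p q]) (measurable, simp_all add: F_nonneg c_const_pos)
  qed
  also have "\<dots> = ennreal k * (\<integral>\<^sup>+uv. G uv \<partial>(sphere_unif \<Otimes>\<^sub>M sphere_unif))"
    unfolding G_def lborel_prod[symmetric] by (rule nn_integral_cmult) measurable
  also have "ennreal (sphere_area p / 2) * ennreal (sphere_area q / 2) * \<dots>
      = ennreal (C_const p * C_const q) * (\<integral>\<^sup>+uv. G uv \<partial>(sphere_unif \<Otimes>\<^sub>M sphere_unif))"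
    using ennreal_C_const_mult[OF p q] unfolding k_def by (metis mult.assoc)
  finally show ?thesis
    unfolding G_def p_def q_def .
qed

lemma dcov_integral_polar:
  fixes \<phi>XY :: "'p::euclidean_space \<Rightarrow> 'q::euclidean_space \<Rightarrow> complex"
    and \<phi>X :: "'p \<Rightarrow> complex" and \<phi>Y :: "'q \<Rightarrow> complex"
  assumes "(\<lambda>ts. \<phi>XY (fst ts) (snd ts) - \<phi>X (fst ts) * \<phi>Y (snd ts)) \<in> borel_measurable (borel \<Otimes>\<^sub>M borel)"
  shows "dcov_integral \<phi>XY \<phi>X \<phi>Y = ennreal (C_const DIM('p) * C_const DIM('q)) *
     (\<integral>\<^sup>+uv. dcov_integral (\<lambda>r \<rho>. \<phi>XY (r *\<^sub>R fst uv) (\<rho> *\<^sub>R snd uv)) (\<lambda>r. \<phi>X (r *\<^sub>R fst uv))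
        (\<lambda>\<rho>. \<phi>Y (\<rho> *\<^sub>R snd uv)) \<partial>(sphere_unif \<Otimes>\<^sub>M sphere_unif))"
proof -
  have "(\<lambda>ts. (cmod (\<phi>XY (fst ts) (snd ts) - \<phi>X (fst ts) * \<phi>Y (snd ts)))\<^sup>2) \<in> borel_measurable (borel \<Otimes>\<^sub>M borel)"
    using assms by measurable
  from nn_integral_dcov_weight_polar[OF this] show ?thesis
    unfolding dcov_integral_def by (simp add: power2_eq_square)
qed

lemma char_fun_inner: "char_fun M (\<lambda>\<omega>. u \<bullet> X \<omega>) = (\<lambda>r. char_fun M X (r *\<^sub>R u))"
  by (simp add: char_fun_def fun_eq_iff inner_scaleR_left inner_real_def)

lemma joint_char_fun_inner:
  "joint_char_fun M (\<lambda>\<omega>. u \<bullet> X \<omega>) (\<lambda>\<omega>. v \<bullet> Y \<omega>) = (\<lambda>r \<rho>. joint_char_fun M X Y (r *\<^sub>R u) (\<rho> *\<^sub>R v))"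
  by (simp add: joint_char_fun_def fun_eq_iff inner_scaleR_left inner_real_def)

lemma emp_char_fun_inner: "emp_char_fun n (\<lambda>j. u \<bullet> Xs j) = (\<lambda>r. emp_char_fun n Xs (r *\<^sub>R u))"
  by (simp add: emp_char_fun_def fun_eq_iff inner_scaleR_left inner_real_def)

lemma emp_joint_char_fun_inner:
  "emp_joint_char_fun n (\<lambda>j. u \<bullet> Xs j) (\<lambda>j. v \<bullet> Ys j) = (\<lambda>r \<rho>. emp_joint_char_fun n Xs Ys (r *\<^sub>R u) (\<rho> *\<^sub>R v))"
  by (simp add: emp_joint_char_fun_def fun_eq_iff inner_scaleR_left inner_real_def)

lemma borel_measurable_cis [measurable]: "cis \<in> borel_measurable borel"
  by (intro borel_measurable_continuous_onI continuous_intros)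

theorem lemma4p2:
  fixes M :: "'a measure"
    and X :: "'a \<Rightarrow> 'p::euclidean_space" and Y :: "'a \<Rightarrow> 'q::euclidean_space"
    and n :: nat and Xs :: "nat \<Rightarrow> 'p" and Ys :: "nat \<Rightarrow> 'q"
  assumes "prob_space M"
    and "X \<in> borel_measurable M" and "Y \<in> borel_measurable M"
  shows "dcov M X Y = ennreal (C_const DIM('p) * C_const DIM('q)) *
           (\<integral>\<^sup>+ uv. dcov M (\<lambda>\<omega>. fst uv \<bullet> X \<omega>) (\<lambda>\<omega>. snd uv \<bullet> Y \<omega>)
              \<partial>(sphere_unif \<Otimes>\<^sub>M sphere_unif)) \<and>
         dcov_n n Xs Ys = ennreal (C_const DIM('p) * C_const DIM('q)) *
           (\<integral>\<^sup>+ uv. dcov_n n (\<lambda>j. fst uv \<bullet> Xs j) (\<lambda>j. snd uv \<bullet> Ys j)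
              \<partial>(sphere_unif \<Otimes>\<^sub>M sphere_unif))"
proof
  interpret prob_space M by fact
  note [measurable] = assms(2,3)
  show "dcov M X Y = ennreal (C_const DIM('p) * C_const DIM('q)) *
      (\<integral>\<^sup>+ uv. dcov M (\<lambda>\<omega>. fst uv \<bullet> X \<omega>) (\<lambda>\<omega>. snd uv \<bullet> Y \<omega>) \<partial>(sphere_unif \<Otimes>\<^sub>M sphere_unif))"
    unfolding dcov_def char_fun_inner joint_char_fun_inner
    by (rule dcov_integral_polar) (unfold char_fun_def joint_char_fun_def, measurable)
  show "dcov_n n Xs Ys = ennreal (C_const DIM('p) * C_const DIM('q)) *
      (\<integral>\<^sup>+ uv. dcov_n n (\<lambda>j. fst uv \<bullet> Xs j) (\<lambda>j. snd uv \<bullet> Ys j) \<partial>(sphere_unif \<Otimes>\<^sub>M sphere_unif))"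
    unfolding dcov_n_def emp_char_fun_inner emp_joint_char_fun_inner
    by (rule dcov_integral_polar) (unfold emp_char_fun_def emp_joint_char_fun_def, measurable)
qed

end
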